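(* In the two-block Spice setting, at any iteration $k$ (with $\mathsf{R}(u^k)>0$ and $\mathsf{R}(\bar u^k)>0$), $H_k=Q_kM_k^{-1}\succ0$ and $G_k=Q_k^\top+Q_k-M_k^\top H_kM_k\succ0$ (with $H_k$, $G_k$ equal to the explicit matrices given in the context), and $$\rho[\vartheta(u)-\vartheta(\bar u^k)]+(w-\bar w^k)^\top\tfrac{1}{\eta_k}\Gamma(\bar w^k)\ \ge\ \tfrac12\big(\|w-w^{k+1}\|_{H_k}^2-\|w-w^k\|_{H_k}^2\big)+\tfrac12\|\bar w^k-w^k\|_{G_k}^2\qquad\forall\,w\in\Omega .$$
   Context: Two-block Spice setting. Let $\mathcal{X}\subseteq\mathbb{R}^n$, $\mathcal{Y}\subseteq\mathbb{R}^m$ be nonempty closed convex sets; $f:\mathbb{R}^n\to\mathbb{R}$, $g:\mathbb{R}^m\to\mathbb{R}$ convex; $\phi_1,\dots,\phi_p:\mathbb{R}^n\to\mathbb{R}$ and $\psi_1,\dots,\psi_p:\mathbb{R}^m\to\mathbb{R}$ convex and continuously differentiable; $\Phi=(\phi_1,\dots,\phi_p)^\top$, $\Psi=(\psi_1,\dots,\psi_p)^\top$ with Jacobians $\mathcal{D}\Phi(x)\in\mathbb{R}^{p\times n}$, $\mathcal{D}\Psi(y)\in\mathbb{R}^{p\times m}$. Let $\mathcal{Z}=\mathbb{R}^p_+$, $\Omega=\mathcal{X}\times\mathcal{Y}\times\mathcal{Z}$, $u=(x,y)$, $w=(x,y,\lambda)$, $\vartheta(u)=f(x)+g(y)$, $\Gamma(w)=(\mathcal{D}\Phi(x)^\top\lambda,\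 \mathcal{D}\Psi(y)^\top\lambda,\ -\Phi(x)-\Psi(y))$. For symmetric $A$, $\|v\|_A^2:=v^\top Av$; matrix norms are spectral norms; $\mathsf{R}(u):=\|\mathcal{D}\Phi(x)\|^2+\|\mathcal{D}\Psi(y)\|^2$. Fix $\rho>0$, $\mu>1$, $w^0=(x^0,y^0,\lambda^0)\in\Omega$ and positive $\eta_0,\eta_1,\dots$. Given $w^k=(x^k,y^k,\lambda^k)$, iteration $k$ is: $r_k=\frac{1}{\eta_k}\sqrt{\mathsf{R}(u^k)}$; $\bar x^k=\arg\min_{x\in\mathcal{X}}\{\rho f(x)+\frac{1}{\eta_k}(\lambda^k)^\top\Phi(x)+\frac{r_k}{2}\|x-x^k\|^2\}$; $\bar y^k=\arg\min_{y\in\mathcal{Y}}\{\rho g(y)+\frac{1}{\eta_k}(\lambda^k)^\top\Psi(y)+\frac{r_k}{2}\|y-y^k\|^2\}$; $\bar u^k=(\bar x^k,\bar y^k)$; $s_k=\frac{\mu\mathsf{R}(\bar u^k)}{\eta_k\sqrt{\mathsf{R}(u^k)}}$; $\bar\lambda^k=\arg\max_{\lambda\in\mathcal{Z}}\{\frac{1}{\eta_k}\lambda^\top[\Phi(\bar x^k)+\Psi(\bar y^k)]-\frac{s_k}{2}\|\lambda-\lambda^k\|^2\}=\max\{\lambda^k+\frac{1}{\eta_ks_k}(\Phi(\bar x^k)+\Psi(\bar y^k)),0\}$; $\bar w^k=(\bar x^k,\bar y^k,\bar\lambda^k)$; $w^{k+1}=w^k-M_k(w^k-\bar w^k)$ with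 $M_k=\begin{pmatrix}I_n&0&-\frac{1}{\eta_kr_k}\mathcal{D}\Phi(\bar x^k)^\top\\0&I_m&-\frac{1}{\eta_kr_k}\mathcal{D}\Psi(\bar y^k)^\top\\0&0&I_p\end{pmatrix}$. It is assumed that $\mathsf{R}(u^k)>0$, $\mathsf{R}(\bar u^k)>0$ for all $k$. Define $Q_k=\begin{pmatrix}r_kI_n&0&-\frac{1}{\eta_k}\mathcal{D}\Phi(\bar x^k)^\top\\0&r_kI_m&-\frac{1}{\eta_k}\mathcal{D}\Psi(\bar y^k)^\top\\0&0&s_kI_p\end{pmatrix}$, $H_k=\mathrm{diag}(r_kI_n,r_kI_m,s_kI_p)$, $G_k=\mathrm{diag}\big(r_kI_n,\ r_kI_m,\ s_kI_p-\frac{1}{\eta_k^2r_k}[\mathcal{D}\Phi(\bar x^k)\mathcal{D}\Phi(\bar x^k)^\top+\mathcal{D}\Psi(\bar y^k)\mathcal{D}\Psi(\bar y^k)^\top]\big)$. *)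

theory Defs
  imports "HOL-Analysis.Analysis"
begin

definition specnorm :: "real^'a::finite^'b::finite \<Rightarrow> real" where
  "specnorm A = onorm (\<lambda>v. A *v v)"

definition wvec :: "real^'n::finite \<Rightarrow> real^'m::finite \<Rightarrow> real^'p::finite \<Rightarrow> real^('n + ('m + 'p))" where
  "wvec x y l = (\<chi> i. case i of Inl a \<Rightarrow> x $ a | Inr (Inl b) \<Rightarrow> y $ b | Inr (Inr c) \<Rightarrow> l $ c)"

definition block3 ::
  "real^'n::finite^'n \<Rightarrow> real^'m::finite^'n \<Rightarrow> real^'p::finite^'n \<Rightarrow>
   real^'n^'m \<Rightarrow> real^'m^'m \<Rightarrow> real^'p^'m \<Rightarrow>
   real^'n^'p \<Rightarrow> real^'m^'p \<Rightarrow> real^'p^'p \<Rightarrow> real^('n + ('m + 'p))^('n + ('m + 'p))" where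
  "block3 A11 A12 A13 A21 A22 A23 A31 A32 A33 =
    (\<chi> i j. case i of
       Inl a \<Rightarrow> (case j of Inl b \<Rightarrow> A11$a$b | Inr (Inl b) \<Rightarrow> A12$a$b | Inr (Inr b) \<Rightarrow> A13$a$b)
     | Inr (Inl a) \<Rightarrow> (case j of Inl b \<Rightarrow> A21$a$b | Inr (Inl b) \<Rightarrow> A22$a$b | Inr (Inr b) \<Rightarrow> A23$a$b)
     | Inr (Inr a) \<Rightarrow> (case j of Inl b \<Rightarrow> A31$a$b | Inr (Inl b) \<Rightarrow> A32$a$b | Inr (Inr b) \<Rightarrow> A33$a$b))"

definition qf :: "real^'a::finite^'a \<Rightarrow> real^'a \<Rightarrow> real" where
  "qf A v = v \<bullet> (A *v v)"

definition posdef :: "real^'a::finite^'a \<Rightarrow> bool" where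
  "posdef A \<longleftrightarrow> transpose A = A \<and> (\<forall>v. v \<noteq> 0 \<longrightarrow> v \<bullet> (A *v v) > 0)"

end

theory Submission
  imports Defs
begin

text \<open>
  Write wb for the predictor (xb, yb, lb). Since Q = H M with H symmetric and the corrector is
  w_{k+1} = w_k - M (w_k - wb), expanding squares gives the three-point identity
  2 (w - wb)^T Q (w_k - wb) = |w - w_{k+1}|_H^2 - |w - w_k|_H^2 + |wb - w_k|_G^2
  for G = Q^T + Q - M^T H M. The left-hand side of the claim dominates (w - wb)^T Q (w_k - wb): on the primal blocks this is the
  first-order optimality condition of the two proximal subproblems, whose constraint terms get
  linearised at the minimisers, and on the multiplier block it is the variational inequality of the
  projection onto the nonnegative orthant. Positive definiteness of G reduces to
  s_k > (|D Phi|^2 + |D Psi|^2) / (eta_k^2 r_k), which is where mu > 1 enters.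
\<close>

lemma sum_UNIV_Plus:
  "sum g (UNIV :: ('a::finite + 'b::finite) set)
    = sum (\<lambda>a. g (Inl a)) UNIV + sum (\<lambda>b. g (Inr b)) UNIV"
  by (subst UNIV_Plus_UNIV[symmetric], subst sum.Plus) (auto simp: o_def)

lemma inner_wvec: "wvec a b c \<bullet> wvec a' b' c' = a \<bullet> a' + b \<bullet> b' + c \<bullet> c'"
  by (simp add: wvec_def inner_vec_def sum_UNIV_Plus)

lemma wvec_add: "wvec a b c + wvec a' b' c' = wvec (a + a') (b + b') (c + c')"
  by (simp add: wvec_def vec_eq_iff split: sum.splits)

lemma wvec_diff: "wvec a b c - wvec a' b' c' = wvec (a - a') (b - b') (c - c')"
  by (simp add: wvec_def vec_eq_iff split: sum.splits)

lemma wvec_scaleR: "t *\<^sub>R wvec a b c = wvec (t *\<^sub>R a) (t *\<^sub>R b) (t *\<^sub>R c)"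
  by (simp add: wvec_def vec_eq_iff split: sum.splits)

lemma wvec_eq_iff: "wvec a b c = wvec a' b' c' \<longleftrightarrow> a = a' \<and> b = b' \<and> c = c'"
  by (auto simp add: wvec_def vec_eq_iff split: sum.splits)

lemma wvec_0: "wvec 0 0 0 = 0"
  by (simp add: wvec_def vec_eq_iff split: sum.splits)

lemma wvec_cases:
  fixes v :: "real^('n::finite + ('m::finite + 'p::finite))"
  obtains a b c where "v = wvec a b c"
proof
  show "v = wvec (\<chi> i. v $ Inl i) (\<chi> i. v $ Inr (Inl i)) (\<chi> i. v $ Inr (Inr i))"
    by (simp add: wvec_def vec_eq_iff split: sum.splits)
qed

lemma block3_mult_wvec:
  "block3 A11 A12 A13 A21 A22 A23 A31 A32 A33 *v wvec a b c =
    wvec (A11 *v a + A12 *v b + A13 *v c) (A21 *v a + A22 *v b + A23 *v c)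
      (A31 *v a + A32 *v b + A33 *v c)"
  by (simp add: block3_def wvec_def vec_eq_iff matrix_vector_mult_def sum_UNIV_Plus split: sum.splits)

lemma transpose_block3:
  "transpose (block3 A11 A12 A13 A21 A22 A23 A31 A32 A33) =
    block3 (transpose A11) (transpose A21) (transpose A31) (transpose A12) (transpose A22)
      (transpose A32) (transpose A13) (transpose A23) (transpose A33)"
  by (simp add: block3_def transpose_def vec_eq_iff split: sum.splits)

type_synonym ('n, 'm, 'p) block_matrix = "real^('n + ('m + 'p))^('n + ('m + 'p))"

lemma matrix_eq_wvecI:
  fixes A B :: "('n::finite, 'm::finite, 'p::finite) block_matrix"
  assumes "\<And>a b c. A *v wvec a b c = B *v wvec a b c"
  shows "A = B"
  unfolding matrix_eq by (metis assms wvec_cases)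

lemma matrix_vector_mult_uminus_left: "(- A) *v x = - (A *v (x::real^'a::finite))"
  by (simp add: matrix_vector_mult_def vec_eq_iff sum_negf)

lemma matrix_vector_mult_uminus_right: "A *v (- x) = - (A *v (x::real^'a::finite))"
  by (simp add: matrix_vector_mult_def vec_eq_iff sum_negf)

lemma transpose_0: "transpose (0::real^'a::finite^'b::finite) = 0"
  by (simp add: transpose_def vec_eq_iff)

lemma transpose_uminus: "transpose (- (A::real^'a::finite^'b::finite)) = - transpose A"
  by (simp add: transpose_def vec_eq_iff)

lemma transpose_add: "transpose ((A::real^'a::finite^'b::finite) + B) = transpose A + transpose B"
  by (simp add: transpose_def vec_eq_iff)

lemma transpose_diff: "transpose ((A::real^'a::finite^'b::finite) - B) = transpose A - transpose B"
  by (simp add: transpose_def vec_eq_iff)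

lemma inner_transpose_mult: "(x::real^'a::finite) \<bullet> (transpose A *v y) = (A *v x) \<bullet> y"
  by (metis dot_lmul_matrix inner_commute transpose_transpose vector_transpose_matrix)

lemma matrix_mul_matrix_inv: "invertible A \<Longrightarrow> A ** matrix_inv A = mat 1"
  unfolding invertible_def matrix_inv_def by (rule conjunct1[OF someI_ex])

lemmas block_simps = block3_mult_wvec wvec_eq_iff wvec_add wvec_diff
  transpose_block3 transpose_scalar transpose_0 transpose_uminus
  matrix_vector_mult_uminus_left scaleR_matrix_vector_assoc[symmetric]
  matrix_vector_mul_assoc[symmetric]

definition blockdiag3 ::
  "real^'n::finite^'n \<Rightarrow> real^'m::finite^'m \<Rightarrow> real^'p::finite^'p \<Rightarrow> ('n, 'm, 'p) block_matrix"
  where "blockdiag3 A B C = block3 A 0 0 0 B 0 0 0 C"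

text \<open>The matrices M_k, Q_k, H_k, G_k of the iteration, with e = eta_k, D1 = DPhi (xb_k) and
  D2 = DPsi (yb_k).\<close>

definition spice_M ::
  "real \<Rightarrow> real \<Rightarrow> real^'n::finite^'p::finite \<Rightarrow> real^'m::finite^'p \<Rightarrow> ('n, 'm, 'p) block_matrix"
  where "spice_M e r D1 D2 =
    block3 (mat 1) 0 (- (1 / (e * r)) *\<^sub>R transpose D1)
      0 (mat 1) (- (1 / (e * r)) *\<^sub>R transpose D2)
      0 0 (mat 1)"

definition spice_Q ::
  "real \<Rightarrow> real \<Rightarrow> real \<Rightarrow> real^'n::finite^'p::finite \<Rightarrow> real^'m::finite^'p \<Rightarrow> ('n, 'm, 'p) block_matrix"
  where "spice_Q e r s D1 D2 =
    block3 (r *\<^sub>R mat 1) 0 (- (1 / e) *\<^sub>R transpose D1)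
      0 (r *\<^sub>R mat 1) (- (1 / e) *\<^sub>R transpose D2)
      0 0 (s *\<^sub>R mat 1)"

definition spice_H :: "real \<Rightarrow> real \<Rightarrow> ('n::finite, 'm::finite, 'p::finite) block_matrix"
  where "spice_H r s = blockdiag3 (r *\<^sub>R mat 1) (r *\<^sub>R mat 1) (s *\<^sub>R mat 1)"

definition spice_G ::
  "real \<Rightarrow> real \<Rightarrow> real \<Rightarrow> real^'n::finite^'p::finite \<Rightarrow> real^'m::finite^'p \<Rightarrow> ('n, 'm, 'p) block_matrix"
  where "spice_G e r s D1 D2 = blockdiag3 (r *\<^sub>R mat 1) (r *\<^sub>R mat 1)
    (s *\<^sub>R mat 1 - (1 / (e\<^sup>2 * r)) *\<^sub>R (D1 ** transpose D1 + D2 ** transpose D2))"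

lemma spice_M_mult_neg: "spice_M e r D1 D2 ** spice_M e r (- D1) (- D2) = mat 1"
  by (rule matrix_eq_wvecI) (simp add: spice_M_def block_simps)

lemma invertible_spice_M: "invertible (spice_M e r D1 D2)"
  unfolding invertible_def
  using spice_M_mult_neg[of e r D1 D2] spice_M_mult_neg[of e r "- D1" "- D2"] by auto

lemma spice_Q_eq:
  assumes "r \<noteq> 0"
  shows "spice_Q e r s D1 D2 = spice_H r s ** spice_M e r D1 D2"
  by (rule matrix_eq_wvecI)
    (use assms in \<open>simp add: spice_Q_def spice_M_def spice_H_def blockdiag3_def block_simps
       algebra_simps\<close>)

lemma spice_Q_mult_matrix_inv:
  assumes "r \<noteq> 0"
  shows "spice_Q e r s D1 D2 ** matrix_inv (spice_M e r D1 D2) = spice_H r s"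
  by (simp add: spice_Q_eq[OF assms] matrix_mul_assoc[symmetric] matrix_mul_matrix_inv
      invertible_spice_M)

lemma spice_G_eq:
  assumes "r \<noteq> 0"
  shows "transpose (spice_Q e r s D1 D2) + spice_Q e r s D1 D2
      - transpose (spice_M e r D1 D2) ** spice_H r s ** spice_M e r D1 D2
    = spice_G e r s D1 D2"
  by (rule matrix_eq_wvecI)
    (use assms in \<open>simp add: spice_Q_def spice_M_def spice_H_def spice_G_def blockdiag3_def block_simps
       algebra_simps power2_eq_square\<close>)

lemma posdef_nonneg: "posdef A \<Longrightarrow> 0 \<le> x \<bullet> (A *v x)"
  unfolding posdef_def by (cases "x = 0") (auto intro: less_imp_le)

lemma posdef_blockdiag3:
  assumes A: "posdef A" and B: "posdef B" and C: "posdef C"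
  shows "posdef (blockdiag3 A B C)"
  unfolding posdef_def
proof (intro conjI allI impI)
  show "transpose (blockdiag3 A B C) = blockdiag3 A B C"
    using A B C by (simp add: posdef_def blockdiag3_def transpose_block3 transpose_0)
  fix v :: "real^('a + ('b + 'c))" assume "v \<noteq> 0"
  obtain a b c where v: "v = wvec a b c" by (rule wvec_cases)
  with \<open>v \<noteq> 0\<close> have "a \<noteq> 0 \<or> b \<noteq> 0 \<or> c \<noteq> 0" by (auto simp: wvec_0)
  then have "0 < a \<bullet> (A *v a) + b \<bullet> (B *v b) + c \<bullet> (C *v c)"
    using A B C posdef_nonneg[OF A, of a] posdef_nonneg[OF B, of b] posdef_nonneg[OF C, of c]
    unfolding posdef_def by (smt (verit))
  then show "0 < v \<bullet> (blockdiag3 A B C *v v)"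
    by (simp add: v blockdiag3_def block3_mult_wvec inner_wvec)
qed

lemma posdef_scaled_mat1: "c > 0 \<Longrightarrow> posdef (c *\<^sub>R mat 1)"
  by (simp add: posdef_def transpose_scalar scaleR_matrix_vector_assoc[symmetric])

lemma norm_transpose_mult_le: "norm (transpose A *v c) \<le> specnorm A * norm c"
  for A :: "real^'a::finite^'b::finite"
proof -
  define y where "y = transpose A *v c"
  have "(norm y)\<^sup>2 = (A *v y) \<bullet> c"
    by (simp add: y_def power2_norm_eq_inner inner_transpose_mult del: transpose_matrix_vector)
  also have "\<dots> \<le> norm (A *v y) * norm c" by (rule norm_cauchy_schwarz)
  also have "\<dots> \<le> specnorm A * norm y * norm c"
    unfolding specnorm_def
    by (intro mult_right_mono onorm[OF matrix_vector_mul_bounded_linear]) simp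
  finally have "norm y * norm y \<le> (specnorm A * norm c) * norm y"
    by (simp add: power2_eq_square algebra_simps)
  moreover have "0 \<le> specnorm A"
    unfolding specnorm_def by (rule onorm_pos_le[OF matrix_vector_mul_bounded_linear])
  ultimately show ?thesis
    unfolding y_def[symmetric] by (cases "norm y = 0") auto
qed

lemma inner_gram: "c \<bullet> ((A ** transpose A) *v c) = (norm (transpose A *v c))\<^sup>2"
  for A :: "real^'a::finite^'b::finite"
proof -
  have "c \<bullet> (A *v (transpose A *v c)) = (transpose A *v c) \<bullet> (transpose A *v c)"
    using inner_transpose_mult[of c "transpose A"] unfolding transpose_transpose .
  then show ?thesis by (simp only: matrix_vector_mul_assoc power2_norm_eq_inner)
qed

lemma posdef_scaled_mat1_minus_gram:
  fixes D1 :: "real^'n::finite^'p::finite" and D2 :: "real^'m::finite^'p"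
  assumes k: "k \<ge> 0" and s: "s > k * ((specnorm D1)\<^sup>2 + (specnorm D2)\<^sup>2)"
  shows "posdef (s *\<^sub>R mat 1 - k *\<^sub>R (D1 ** transpose D1 + D2 ** transpose D2))"
  unfolding posdef_def
proof (intro conjI allI impI)
  show "transpose (s *\<^sub>R mat 1 - k *\<^sub>R (D1 ** transpose D1 + D2 ** transpose D2)) =
      s *\<^sub>R mat 1 - k *\<^sub>R (D1 ** transpose D1 + D2 ** transpose D2)"
    by (simp only: transpose_add transpose_diff matrix_transpose_mul transpose_scalar transpose_mat
        transpose_transpose)
  fix c :: "real^'p" assume "c \<noteq> 0"
  have "k * ((norm (transpose D1 *v c))\<^sup>2 + (norm (transpose D2 *v c))\<^sup>2)
      \<le> k * ((specnorm D1 * norm c)\<^sup>2 + (specnorm D2 * norm c)\<^sup>2)"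
    by (intro mult_left_mono[OF _ k] add_mono power_mono norm_transpose_mult_le norm_ge_zero)
  also have "\<dots> = k * ((specnorm D1)\<^sup>2 + (specnorm D2)\<^sup>2) * (norm c)\<^sup>2"
    by (simp add: power_mult_distrib algebra_simps)
  also have "\<dots> < s * (norm c)\<^sup>2"
    using s \<open>c \<noteq> 0\<close> by (intro mult_strict_right_mono) auto
  finally have "k * ((norm (transpose D1 *v c))\<^sup>2 + (norm (transpose D2 *v c))\<^sup>2) < s * (norm c)\<^sup>2" .
  then show "0 < c \<bullet> ((s *\<^sub>R mat 1 - k *\<^sub>R (D1 ** transpose D1 + D2 ** transpose D2)) *v c)"
    by (simp add: matrix_vector_mult_diff_rdistrib matrix_vector_mult_add_rdistrib inner_gram
        scaleR_matrix_vector_assoc[symmetric] inner_diff_right inner_add_right algebra_simps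
        power2_norm_eq_inner del: transpose_matrix_vector)
qed

lemma posdef_spice_H_G:
  fixes D1 :: "real^'n::finite^'p::finite" and D2 :: "real^'m::finite^'p"
  assumes e: "e > 0" and a: "a > 0" and mu: "mu > 1"
    and R: "(specnorm D1)\<^sup>2 + (specnorm D2)\<^sup>2 > 0"
    and r: "r = 1 / e * sqrt a"
    and s: "s = mu * ((specnorm D1)\<^sup>2 + (specnorm D2)\<^sup>2) / (e * sqrt a)"
  shows "posdef (spice_H r s)" and "posdef (spice_G e r s D1 D2)"
proof -
  have r_pos: "r > 0" and s_pos: "s > 0" using e a mu R by (simp_all add: r s)
  have "1 / (e\<^sup>2 * r) * ((specnorm D1)\<^sup>2 + (specnorm D2)\<^sup>2)
      = ((specnorm D1)\<^sup>2 + (specnorm D2)\<^sup>2) / (e * sqrt a)"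
    using e by (simp add: r power2_eq_square)
  also have "\<dots> < s" using e a mu R by (simp add: s divide_strict_right_mono)
  finally have gap: "1 / (e\<^sup>2 * r) * ((specnorm D1)\<^sup>2 + (specnorm D2)\<^sup>2) < s" .
  show "posdef (spice_H r s)"
    unfolding spice_H_def using r_pos s_pos by (intro posdef_blockdiag3 posdef_scaled_mat1)
  show "posdef (spice_G e r s D1 D2)"
    unfolding spice_G_def using r_pos s_pos e gap
    by (intro posdef_blockdiag3 posdef_scaled_mat1 posdef_scaled_mat1_minus_gram) auto
qed

lemma qf_three_point:
  fixes H Q M G :: "real^'a::finite^'a"
  assumes H: "transpose H = H" and Q: "Q = H ** M"
    and G: "G = transpose Q + Q - transpose M ** H ** M" and W': "W' = W - M *v (W - Wb)"
  shows "(w - Wb) \<bullet> (Q *v (W - Wb)) = 1/2 * (qf H (w - W') - qf H (w - W)) + 1/2 * qf G (Wb - W)"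
proof -
  define a where "a = w - W"
  define e where "e = W - Wb"
  have Qe: "Q *v e = H *v (M *v e)" by (simp add: Q matrix_vector_mul_assoc)
  have H_sym: "(M *v e) \<bullet> (H *v a) = a \<bullet> (H *v (M *v e))"
    by (metis H inner_commute inner_transpose_mult)
  have "qf H (w - W') = a \<bullet> (H *v a) + 2 * (a \<bullet> (Q *v e)) + (M *v e) \<bullet> (H *v (M *v e))"
  proof -
    have "w - W' = a + M *v e" by (simp add: W' a_def e_def)
    then show ?thesis
      unfolding qf_def Qe
      by (simp add: matrix_vector_right_distrib inner_add_left inner_add_right H_sym)
  qed
  moreover have "qf G (Wb - W) = 2 * (e \<bullet> (Q *v e)) - (M *v e) \<bullet> (H *v (M *v e))"
  proof -
    have "e \<bullet> (transpose Q *v e) = e \<bullet> (Q *v e)"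
      by (metis inner_commute inner_transpose_mult)
    moreover have "e \<bullet> ((transpose M ** H ** M) *v e) = (M *v e) \<bullet> (H *v (M *v e))"
      by (metis inner_transpose_mult matrix_vector_mul_assoc)
    moreover have "Wb - W = - e" by (simp add: e_def)
    ultimately show ?thesis
      unfolding qf_def G
      by (simp add: matrix_vector_mult_uminus_right matrix_vector_mult_diff_rdistrib
          matrix_vector_mult_add_rdistrib inner_diff_right inner_add_right del: transpose_matrix_vector)
  qed
  moreover have "w - Wb = a + e" by (simp add: a_def e_def)
  moreover have "qf H (w - W) = a \<bullet> (H *v a)" by (simp add: qf_def a_def)
  ultimately show ?thesis
    unfolding e_def[symmetric] by (simp add: inner_add_left algebra_simps)
qed

text \<open>Convexity bounds the difference quotient of f along the segment from z0 to z by f z - f z0;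
  as the step tends to 0, that of the smooth part tends to its derivative.\<close>
lemma prox_minimizer_first_order:
  fixes f h :: "'a::real_inner \<Rightarrow> real"
  assumes f: "convex_on X f" and X: "convex X" "z0 \<in> X" "z \<in> X"
    and h: "(h has_derivative h') (at z0)"
    and opt: "\<forall>z\<in>X. f z0 + h z0 + r / 2 * (norm (z0 - c))\<^sup>2 \<le> f z + h z + r / 2 * (norm (z - c))\<^sup>2"
  shows "f z - f z0 + h' (z - z0) + r * ((z - z0) \<bullet> (z0 - c)) \<ge> 0"
proof -
  define d where "d = z - z0"
  define q where "q t = h (z0 + t *\<^sub>R d) + r / 2 * ((z0 + t *\<^sub>R d - c) \<bullet> (z0 + t *\<^sub>R d - c))" for t :: real
  define L where "L = h' d + r * (d \<bullet> (z0 - c))"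
  have "((\<lambda>t. h (z0 + t *\<^sub>R d)) has_derivative (\<lambda>t. h' (t *\<^sub>R d))) (at 0)"
    by (rule has_derivative_compose[of "\<lambda>t. z0 + t *\<^sub>R d" _ 0 UNIV h, simplified])
       (auto intro!: derivative_eq_intros h)
  then have "(q has_derivative (\<lambda>t. h' (t *\<^sub>R d)
      + r / 2 * ((t *\<^sub>R d) \<bullet> (z0 + 0 *\<^sub>R d - c) + (z0 + 0 *\<^sub>R d - c) \<bullet> (t *\<^sub>R d)))) (at 0)"
    unfolding q_def by (auto intro!: derivative_eq_intros)
  moreover have "(\<lambda>t. h' (t *\<^sub>R d)
      + r / 2 * ((t *\<^sub>R d) \<bullet> (z0 + 0 *\<^sub>R d - c) + (z0 + 0 *\<^sub>R d - c) \<bullet> (t *\<^sub>R d))) = (*) L"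
    using h by (auto simp: fun_eq_iff L_def linear_cmul has_derivative_linear inner_commute algebra_simps)
  ultimately have "(q has_field_derivative L) (at 0)"
    by (simp add: has_field_derivative_def)
  then have "((\<lambda>t. (q t - q 0) / t) \<longlongrightarrow> L) (at_right 0)"
    unfolding has_field_derivative_iff by (auto intro: tendsto_mono[OF at_le])
  then have lim: "((\<lambda>t. f z - f z0 + (q t - q 0) / t) \<longlongrightarrow> f z - f z0 + L) (at_right 0)"
    by (intro tendsto_intros)
  have "f z - f z0 + (q t - q 0) / t \<ge> 0" if t: "0 < t" "t < 1" for t
  proof -
    have zt: "z0 + t *\<^sub>R d = (1 - t) *\<^sub>R z0 + t *\<^sub>R z" by (simp add: d_def algebra_simps)
    have "z0 + t *\<^sub>R d \<in> X" unfolding zt using X t by (intro convexD) auto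
    then have "f z0 + q 0 \<le> f (z0 + t *\<^sub>R d) + q t"
      using opt by (fastforce simp: q_def power2_norm_eq_inner add.assoc)
    also have "f (z0 + t *\<^sub>R d) \<le> (1 - t) * f z0 + t * f z"
      unfolding zt using convex_onD[OF f, of t z0 z] X t by simp
    finally have "0 \<le> t * (f z - f z0) + (q t - q 0)" by (simp add: algebra_simps)
    then show ?thesis using t by (simp add: field_simps)
  qed
  then have "eventually (\<lambda>t. f z - f z0 + (q t - q 0) / t \<ge> 0) (at_right 0)"
    unfolding eventually_at_right_field by (intro exI[of _ 1]) auto
  from tendsto_lowerbound[OF lim this] show ?thesis by (simp add: L_def d_def)
qed

lemma nonneg_orthant_projection_ineq:
  fixes l lam g :: "real^'p::finite"
  assumes l: "\<And>i. l $ i \<ge> 0" and t: "t \<ge> 0"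
    and lb: "lb = (\<chi> i. max (lam $ i + t * g $ i) 0)"
  shows "t * ((l - lb) \<bullet> g) \<le> (l - lb) \<bullet> (lb - lam)"
proof -
  have "t * ((l - lb) $ i * g $ i) \<le> (l - lb) $ i * (lb - lam) $ i" for i
    using l[of i] t mult_nonneg_nonpos[of "l $ i" "lam $ i + t * g $ i"]
    by (cases "lam $ i + t * g $ i \<le> 0") (auto simp: lb algebra_simps)
  then show ?thesis
    unfolding inner_vec_def sum_distrib_left by (intro sum_mono) simp
qed

lemma spice_prediction_ineq:
  fixes f :: "real^'n::finite \<Rightarrow> real" and g :: "real^'m::finite \<Rightarrow> real"
    and Phi :: "real^'n \<Rightarrow> real^'p::finite" and Psi :: "real^'m \<Rightarrow> real^'p"
  assumes f: "convex_on X f" and g: "convex_on Y g"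
    and rho: "rho \<ge> 0" and e: "e > 0" and s: "s > 0"
    and Phi: "(Phi has_derivative (\<lambda>h. D1 *v h)) (at xb)"
    and Psi: "(Psi has_derivative (\<lambda>h. D2 *v h)) (at yb)"
    and X: "convex X" "xb \<in> X" "u \<in> X" and Y: "convex Y" "yb \<in> Y" "v \<in> Y"
    and l: "\<forall>i. l $ i \<ge> 0"
    and xb: "\<forall>z\<in>X. rho * f xb + (1 / e) * (lam \<bullet> Phi xb) + r / 2 * (norm (xb - x))\<^sup>2
        \<le> rho * f z + (1 / e) * (lam \<bullet> Phi z) + r / 2 * (norm (z - x))\<^sup>2"
    and yb: "\<forall>z\<in>Y. rho * g yb + (1 / e) * (lam \<bullet> Psi yb) + r / 2 * (norm (yb - y))\<^sup>2
        \<le> rho * g z + (1 / e) * (lam \<bullet> Psi z) + r / 2 * (norm (z - y))\<^sup>2"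
    and lb: "lb = (\<chi> i. max (lam $ i + (1 / (e * s)) * (Phi xb $ i + Psi yb $ i)) 0)"
  shows "(wvec u v l - wvec xb yb lb) \<bullet> (spice_Q e r s D1 D2 *v (wvec x y lam - wvec xb yb lb))
    \<le> rho * ((f u + g v) - (f xb + g yb))
      + (wvec u v l - wvec xb yb lb) \<bullet>
          ((1 / e) *\<^sub>R wvec (transpose D1 *v lb) (transpose D2 *v lb) (- Phi xb - Psi yb))"
proof -
  have opt_x: "0 \<le> rho * f u - rho * f xb + (1 / e) * (lam \<bullet> (D1 *v (u - xb)))
      + r * ((u - xb) \<bullet> (xb - x))"
    using prox_minimizer_first_order[OF convex_on_cmul[OF rho f] X
        has_derivative_mult_right[OF has_derivative_inner_right[OF Phi]] xb]
    by simp
  have opt_y: "0 \<le> rho * g v - rho * g yb + (1 / e) * (lam \<bullet> (D2 *v (v - yb)))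
      + r * ((v - yb) \<bullet> (yb - y))"
    using prox_minimizer_first_order[OF convex_on_cmul[OF rho g] Y
        has_derivative_mult_right[OF has_derivative_inner_right[OF Psi]] yb]
    by simp
  have opt_l: "(1 / e) * ((l - lb) \<bullet> (Phi xb + Psi yb)) \<le> s * ((l - lb) \<bullet> (lb - lam))"
  proof -
    have lb': "lb = (\<chi> i. max (lam $ i + 1 / (e * s) * (Phi xb + Psi yb) $ i) 0)" by (simp add: lb)
    have "1 / (e * s) * ((l - lb) \<bullet> (Phi xb + Psi yb)) \<le> (l - lb) \<bullet> (lb - lam)"
      using l e s by (intro nonneg_orthant_projection_ineq[OF _ _ lb']) auto
    from mult_left_mono[OF this, of s] s show ?thesis by simp
  qed
  have Q_inner:
    "(wvec u v l - wvec xb yb lb) \<bullet> (spice_Q e r s D1 D2 *v (wvec x y lam - wvec xb yb lb))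
      = - (r * ((u - xb) \<bullet> (xb - x))) - (1 / e) * ((u - xb) \<bullet> (transpose D1 *v (lam - lb)))
        - r * ((v - yb) \<bullet> (yb - y)) - (1 / e) * ((v - yb) \<bullet> (transpose D2 *v (lam - lb)))
        - s * ((l - lb) \<bullet> (lb - lam))"
    by (simp add: spice_Q_def wvec_diff block3_mult_wvec inner_wvec inner_add_right inner_diff_right
        scaleR_matrix_vector_assoc[symmetric] matrix_vector_mult_uminus_left right_diff_distrib
        del: transpose_matrix_vector)
  have Gam_inner: "(wvec u v l - wvec xb yb lb) \<bullet>
      ((1 / e) *\<^sub>R wvec (transpose D1 *v lb) (transpose D2 *v lb) (- Phi xb - Psi yb))
    = (1 / e) * ((u - xb) \<bullet> (transpose D1 *v lb)) + (1 / e) * ((v - yb) \<bullet> (transpose D2 *v lb))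
      - (1 / e) * ((l - lb) \<bullet> (Phi xb + Psi yb))"
    by (simp add: wvec_diff wvec_scaleR inner_wvec inner_diff_right inner_add_right add_divide_distrib
        diff_divide_distrib)
  have transpose_terms:
    "(u - xb) \<bullet> (transpose D1 *v (lam - lb)) = lam \<bullet> (D1 *v (u - xb)) - (u - xb) \<bullet> (transpose D1 *v lb)"
    "(v - yb) \<bullet> (transpose D2 *v (lam - lb)) = lam \<bullet> (D2 *v (v - yb)) - (v - yb) \<bullet> (transpose D2 *v lb)"
    by (simp_all add: inner_transpose_mult inner_commute matrix_vector_mult_diff_distrib
        inner_diff_right del: transpose_matrix_vector)
  show ?thesis
    using opt_x opt_y opt_l
    by (simp only: Q_inner Gam_inner transpose_terms right_diff_distrib distrib_left)
qed

theorem lemma4p2: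
  fixes X :: "(real^'n::finite) set" and Y :: "(real^'m::finite) set"
    and f :: "real^'n \<Rightarrow> real" and g :: "real^'m \<Rightarrow> real"
    and Phi :: "real^'n \<Rightarrow> real^'p::finite" and Psi :: "real^'m \<Rightarrow> real^'p"
    and DPhi :: "real^'n \<Rightarrow> real^'n^'p" and DPsi :: "real^'m \<Rightarrow> real^'m^'p"
    and rho mu :: real and eta :: "nat \<Rightarrow> real"
    and x xb :: "nat \<Rightarrow> real^'n" and y yb :: "nat \<Rightarrow> real^'m"
    and lam lb :: "nat \<Rightarrow> real^'p"
    and R :: "real^'n \<Rightarrow> real^'m \<Rightarrow> real"
    and r s :: "nat \<Rightarrow> real"
    and W Wb :: "nat \<Rightarrow> real^('n + ('m + 'p))"
    and Gam :: "real^'n \<Rightarrow> real^'m \<Rightarrow> real^'p \<Rightarrow> real^('n + ('m + 'p))"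
    and M Q H G :: "nat \<Rightarrow> real^('n + ('m + 'p))^('n + ('m + 'p))"
  assumes X: "X \<noteq> {}" "closed X" "convex X"
    and Y: "Y \<noteq> {}" "closed Y" "convex Y"
    and f: "convex_on UNIV f" and g: "convex_on UNIV g"
    and Phi_cvx: "\<And>i. convex_on UNIV (\<lambda>z. Phi z $ i)"
    and Psi_cvx: "\<And>i. convex_on UNIV (\<lambda>z. Psi z $ i)"
    and Phi_der: "\<And>z. (Phi has_derivative (\<lambda>h. DPhi z *v h)) (at z)"
    and Psi_der: "\<And>z. (Psi has_derivative (\<lambda>h. DPsi z *v h)) (at z)"
    and DPhi_cont: "continuous_on UNIV DPhi" and DPsi_cont: "continuous_on UNIV DPsi"
    and rho: "rho > 0" and mu: "mu > 1" and eta: "\<And>k. eta k > 0"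
    and w0: "x 0 \<in> X" "y 0 \<in> Y" "\<And>i. lam 0 $ i \<ge> 0"
    and R_def: "R \<equiv> \<lambda>u v. (specnorm (DPhi u))\<^sup>2 + (specnorm (DPsi v))\<^sup>2"
    and Rpos: "\<And>k. R (x k) (y k) > 0" "\<And>k. R (xb k) (yb k) > 0"
    and r_def: "r \<equiv> \<lambda>k. (1 / eta k) * sqrt (R (x k) (y k))"
    and xb: "\<And>k. xb k \<in> X \<and> (\<forall>z\<in>X.
        rho * f (xb k) + (1 / eta k) * (lam k \<bullet> Phi (xb k)) + r k / 2 * (norm (xb k - x k))\<^sup>2
        \<le> rho * f z + (1 / eta k) * (lam k \<bullet> Phi z) + r k / 2 * (norm (z - x k))\<^sup>2)"
    and yb: "\<And>k. yb k \<in> Y \<and> (\<forall>z\<in>Y.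
        rho * g (yb k) + (1 / eta k) * (lam k \<bullet> Psi (yb k)) + r k / 2 * (norm (yb k - y k))\<^sup>2
        \<le> rho * g z + (1 / eta k) * (lam k \<bullet> Psi z) + r k / 2 * (norm (z - y k))\<^sup>2)"
    and s_def: "s \<equiv> \<lambda>k. mu * R (xb k) (yb k) / (eta k * sqrt (R (x k) (y k)))"
    and lb: "\<And>k. lb k = (\<chi> i. max (lam k $ i + (1 / (eta k * s k)) * (Phi (xb k) $ i + Psi (yb k) $ i)) 0)"
    and W_def: "W \<equiv> \<lambda>k. wvec (x k) (y k) (lam k)"
    and Wb_def: "Wb \<equiv> \<lambda>k. wvec (xb k) (yb k) (lb k)"
    and M_def: "M \<equiv> \<lambda>k. block3 (mat 1) 0 (- (1 / (eta k * r k)) *\<^sub>R transpose (DPhi (xb k)))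
                               0 (mat 1) (- (1 / (eta k * r k)) *\<^sub>R transpose (DPsi (yb k)))
                               0 0 (mat 1)"
    and update: "\<And>k. W (Suc k) = W k - M k *v (W k - Wb k)"
    and Q_def: "Q \<equiv> \<lambda>k. block3 (r k *\<^sub>R mat 1) 0 (- (1 / eta k) *\<^sub>R transpose (DPhi (xb k)))
                               0 (r k *\<^sub>R mat 1) (- (1 / eta k) *\<^sub>R transpose (DPsi (yb k)))
                               0 0 (s k *\<^sub>R mat 1)"
    and H_def: "H \<equiv> \<lambda>k. block3 (r k *\<^sub>R mat 1) 0 0 0 (r k *\<^sub>R mat 1) 0 0 0 (s k *\<^sub>R mat 1)"
    and G_def: "G \<equiv> \<lambda>k. block3 (r k *\<^sub>R mat 1) 0 0 0 (r k *\<^sub>R mat 1) 0 0 0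
                   (s k *\<^sub>R mat 1 - (1 / ((eta k)\<^sup>2 * r k)) *\<^sub>R
                      (DPhi (xb k) ** transpose (DPhi (xb k)) + DPsi (yb k) ** transpose (DPsi (yb k))))"
    and Gam_def: "Gam \<equiv> \<lambda>u v l. wvec (transpose (DPhi u) *v l) (transpose (DPsi v) *v l) (- Phi u - Psi v)"
  shows "\<forall>k. invertible (M k)
           \<and> Q k ** matrix_inv (M k) = H k \<and> posdef (H k)
           \<and> transpose (Q k) + Q k - transpose (M k) ** H k ** M k = G k \<and> posdef (G k)
           \<and> (\<forall>u\<in>X. \<forall>v\<in>Y. \<forall>l. (\<forall>i. l $ i \<ge> 0) \<longrightarrow>
                rho * ((f u + g v) - (f (xb k) + g (yb k)))
                  + (wvec u v l - Wb k) \<bullet> ((1 / eta k) *\<^sub>R Gam (xb k) (yb k) (lb k))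
                \<ge> 1/2 * (qf (H k) (wvec u v l - W (Suc k)) - qf (H k) (wvec u v l - W k))
                  + 1/2 * qf (G k) (Wb k - W k))"
proof (intro allI, goal_cases)
  case (1 k)
  have e: "eta k > 0" and R0: "R (x k) (y k) > 0" and R1: "R (xb k) (yb k) > 0"
    using eta Rpos by auto
  have r: "r k > 0" and s: "s k > 0" using e R0 R1 mu by (auto simp: r_def s_def)
  have M: "M k = spice_M (eta k) (r k) (DPhi (xb k)) (DPsi (yb k))"
    and Q: "Q k = spice_Q (eta k) (r k) (s k) (DPhi (xb k)) (DPsi (yb k))"
    and H: "H k = spice_H (r k) (s k)"
    and G: "G k = spice_G (eta k) (r k) (s k) (DPhi (xb k)) (DPsi (yb k))"
    by (simp_all add: M_def Q_def H_def G_def spice_M_def spice_Q_def spice_H_def spice_G_def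
        blockdiag3_def)
  have R1': "(specnorm (DPhi (xb k)))\<^sup>2 + (specnorm (DPsi (yb k)))\<^sup>2 > 0"
    and r_eq: "r k = 1 / eta k * sqrt (R (x k) (y k))"
    and s_eq: "s k = mu * ((specnorm (DPhi (xb k)))\<^sup>2 + (specnorm (DPsi (yb k)))\<^sup>2)
        / (eta k * sqrt (R (x k) (y k)))"
    using R1 by (simp_all add: r_def s_def R_def)
  have posdef: "posdef (H k)" "posdef (G k)"
    unfolding H G by (rule posdef_spice_H_G[OF e R0 mu R1' r_eq s_eq])+
  have QHM: "Q k = H k ** M k" unfolding M Q H using r by (simp add: spice_Q_eq)
  have Qinv: "Q k ** matrix_inv (M k) = H k"
    unfolding M Q H using r by (simp add: spice_Q_mult_matrix_inv)
  have Geq: "transpose (Q k) + Q k - transpose (M k) ** H k ** M k = G k"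
    unfolding M Q H G using r by (intro spice_G_eq) simp
  have "rho * ((f u + g v) - (f (xb k) + g (yb k)))
      + (wvec u v l - Wb k) \<bullet> ((1 / eta k) *\<^sub>R Gam (xb k) (yb k) (lb k))
    \<ge> (wvec u v l - Wb k) \<bullet> (Q k *v (W k - Wb k))"
    if "u \<in> X" "v \<in> Y" "\<forall>i. l $ i \<ge> 0" for u v l
    unfolding Q W_def Wb_def Gam_def using that xb[of k] yb[of k] rho e s
    by (intro spice_prediction_ineq[OF convex_on_subset[OF f subset_UNIV X(3)]
          convex_on_subset[OF g subset_UNIV Y(3)] _ _ _ Phi_der Psi_der X(3) _ _ Y(3)] lb) auto
  moreover have "(wvec u v l - Wb k) \<bullet> (Q k *v (W k - Wb k))
      = 1/2 * (qf (H k) (wvec u v l - W (Suc k)) - qf (H k) (wvec u v l - W k))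
        + 1/2 * qf (G k) (Wb k - W k)" for u v l
    using posdef by (intro qf_three_point[OF _ QHM Geq[symmetric] update]) (simp add: posdef_def)
  ultimately show ?case using posdef Geq Qinv by (simp add: M invertible_spice_M)
qed

end
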